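(* Suppose Assumptions 1 and 2 hold, and let $\rho > \mathcal{D}_{Z_\star} := \max_{(y^\star,Z^\star)\in\mathcal{D}^\star}\operatorname{tr}(Z^\star)$. Then a matrix $\hat X\in\mathbb{S}^n$ is an optimal solution of the primal SDP (P) if and only if it is an optimal solution of the penalized problem $$\min_{X\in\mathbb{S}^n}\ \langle C,X\rangle+\rho\max\{\lambda_{\max}(-X),0\}\quad\text{subject to}\quad \langle A_i,X\rangle=b_i,\ i=1,\dots,m.$$
   Context: Data: $b\in\mathbb{R}^m$ and $C,A_1,\dots,A_m\in\mathbb{S}^n$ (real symmetric $n\times n$ matrices), with the trace inner product $\langle X,Y\rangle=\operatorname{tr}(XY)$. Define $\mathcal{A}:\mathbb{S}^n\to\mathbb{R}^m$, $\mathcal{A}(X)=(\langle A_1,X\rangle,\dots,\langle A_m,X\rangle)^\top$, with adjoint $\mathcal{A}^*(y)=\sum_{i=1}^m y_iA_i$. The primal SDP (P) is $\min_X\langle C,X\rangle$ s.t. $\mathcal{A}(X)=b$, $X\succeq 0$; the dual SDP (D) is $\max_{y,Z} b^\top y$ s.t. $Z+\mathcal{A}^*(y)=C$, $Z\succeq0$. $\mathcal{P}^\star$ is the set of optimal solutions of (P) and $\mathcal{D}^\star$ the set of optimal pairs $(y,Z)$ of (D). Assumption 1: $A_1,\dots,A_m$ are linearly independent. Assumption 2: (P) and (D) are both strictly feasible (there is a feasible $X\succ0$ for (P) and a feasible $(y,Z)$ with $Z\succ0$ for (D)). Under these assumptions $\mathcal{D}^\star$ is nonempty and compact, so the maximum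 defining $\mathcal{D}_{Z_\star}$ exists. $\lambda_{\max}$ denotes the largest eigenvalue. *)

theory Defs
  imports "HOL-Analysis.Analysis"
begin

type_synonym 'n smat = "real^'n^'n"

definition symm :: "'n::finite smat \<Rightarrow> bool" where
  "symm X \<longleftrightarrow> transpose X = X"

definition tinner :: "'n::finite smat \<Rightarrow> 'n smat \<Rightarrow> real" where
  "tinner X Y = trace (X ** Y)"

definition psd :: "'n::finite smat \<Rightarrow> bool" where
  "psd X \<longleftrightarrow> (\<forall>v. 0 \<le> v \<bullet> (X *v v))"

definition pd :: "'n::finite smat \<Rightarrow> bool" where
  "pd X \<longleftrightarrow> (\<forall>v. v \<noteq> 0 \<longrightarrow> 0 < v \<bullet> (X *v v))"

definition lambda_max :: "'n::finite smat \<Rightarrow> real" where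
  "lambda_max X = Max {l. \<exists>v. v \<noteq> 0 \<and> X *v v = l *\<^sub>R v}"

definition opA :: "('m::finite \<Rightarrow> 'n::finite smat) \<Rightarrow> 'n smat \<Rightarrow> real^'m" where
  "opA A X = (\<chi> i. tinner (A i) X)"

definition adjA :: "('m::finite \<Rightarrow> 'n::finite smat) \<Rightarrow> real^'m \<Rightarrow> 'n smat" where
  "adjA A y = (\<Sum>i\<in>UNIV. (y $ i) *\<^sub>R A i)"

definition primal_feasible where
  "primal_feasible A b X \<longleftrightarrow> symm X \<and> opA A X = b \<and> psd X"

definition primal_opt where
  "primal_opt C A b = {X. primal_feasible A b X \<and>
      (\<forall>X'. primal_feasible A b X' \<longrightarrow> tinner C X \<le> tinner C X')}"

definition dual_feasible where
  "dual_feasible C A y Z \<longleftrightarrow> symm Z \<and> Z + adjA A y = C \<and> psd Z"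

definition dual_opt where
  "dual_opt C A b = {(y, Z). dual_feasible C A y Z \<and>
      (\<forall>y' Z'. dual_feasible C A y' Z' \<longrightarrow> b \<bullet> y' \<le> b \<bullet> y)}"

definition DZstar where
  "DZstar C A b = Sup ((\<lambda>(y, Z). trace Z) ` dual_opt C A b)"

definition penalty_obj where
  "penalty_obj C \<rho> X = tinner C X + \<rho> * max (lambda_max (- X)) 0"

definition penalized_opt where
  "penalized_opt C A b \<rho> = {X. symm X \<and> opA A X = b \<and>
      (\<forall>X'. symm X' \<and> opA A X' = b \<longrightarrow> penalty_obj C \<rho> X \<le> penalty_obj C \<rho> X')}"

end

theory Submission
  imports Defs
begin

text \<open>Slater's condition gives strong duality: separating the origin from the convex set of pairs
  \<open>(\<A>(X) - b, \<langle>C,X\<rangle> - p + t)\<close> with \<open>X \<succeq> 0\<close>, \<open>t > 0\<close> produces a dual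
  optimal \<open>(y, Z)\<close> with \<open>b\<^sup>T y\<close> equal to the primal value \<open>p\<close>. For any \<open>X\<close> with
  \<open>\<A>(X) = b\<close> and \<open>t = max (\<lambda>\<^sub>m\<^sub>a\<^sub>x(-X)) 0\<close>, the matrix \<open>X + t I\<close> is positive
  semidefinite, so \<open>\<langle>C,X\<rangle> = \<langle>Z,X\<rangle> + b\<^sup>T y \<ge> p - t tr Z\<close> and the penalized objective is at
  least \<open>p + (\<rho> - tr Z) t\<close>. Since \<open>\<rho> > D\<^sub>Z\<^sub>\<star> \<ge> tr Z\<close>, the penalized problem never goes
  below \<open>p\<close> and reaches it only where \<open>t = 0\<close>, i.e. at primal feasible points.\<close>

section \<open>The trace inner product and rank-one matrices\<close>

lemma tinner_eq_sum: "tinner X Y = (\<Sum>i\<in>UNIV. \<Sum>j\<in>UNIV. X$i$j * Y$j$i)"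
  by (simp add: tinner_def trace_def matrix_matrix_mult_def)

lemma tinner_commute: "tinner X Y = tinner Y X"
  unfolding tinner_def by (rule trace_mul_sym)

lemma linear_tinner: "linear (tinner X)"
  by (rule linearI) (simp_all add: tinner_eq_sum algebra_simps sum.distrib sum_distrib_left)

lemma tinner_add_right: "tinner X (Y + W) = tinner X Y + tinner X W"
  by (rule linear_add[OF linear_tinner])

lemma tinner_scaleR_right: "tinner X (c *\<^sub>R Y) = c * tinner X Y"
  using linear_scale[OF linear_tinner] by simp

lemma tinner_sum_right: "tinner X (\<Sum>k\<in>K. Y k) = (\<Sum>k\<in>K. tinner X (Y k))"
  by (rule linear_sum[OF linear_tinner])

lemma tinner_add_left: "tinner (Y + W) X = tinner Y X + tinner W X"
  by (metis tinner_commute tinner_add_right)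

lemma tinner_scaleR_left: "tinner (c *\<^sub>R Y) X = c * tinner Y X"
  by (metis tinner_commute tinner_scaleR_right)

lemma tinner_sum_left: "tinner (\<Sum>k\<in>K. Y k) X = (\<Sum>k\<in>K. tinner (Y k) X)"
  by (metis (no_types, lifting) sum.cong tinner_commute tinner_sum_right)

lemma tinner_mat_1: "tinner Z (mat 1) = trace Z"
  by (simp add: tinner_def)

definition outer :: "real^'n \<Rightarrow> real^'n \<Rightarrow> real^'n^'n" where
  "outer u v = (\<chi> i j. u$i * v$j)"

lemma outer_mult_vector: "outer u u *v v = (u \<bullet> v) *\<^sub>R u"
  by (simp add: outer_def matrix_vector_mult_def inner_vec_def vec_eq_iff sum_distrib_left
      sum_distrib_right mult.assoc mult.commute mult.left_commute)

lemma tinner_outer: "tinner Z (outer v v) = v \<bullet> (Z *v v)"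
  by (simp add: tinner_eq_sum outer_def matrix_vector_mult_def inner_vec_def sum_distrib_left
      mult.commute mult.left_commute)

lemma symm_outer: "symm (outer v v)"
  by (simp add: symm_def outer_def transpose_def vec_eq_iff mult.commute)

lemma psd_outer: "psd (outer v v)"
  unfolding psd_def by (simp add: outer_mult_vector inner_commute)

lemma symm_add: "symm X \<Longrightarrow> symm Y \<Longrightarrow> symm (X + Y)"
  by (simp add: symm_def transpose_def vec_eq_iff)

lemma symm_scaleR: "symm X \<Longrightarrow> symm (c *\<^sub>R X)"
  by (simp add: symm_def transpose_def vec_eq_iff)

lemma symm_uminus: "symm X \<Longrightarrow> symm (- X)"
  by (simp add: symm_def transpose_def vec_eq_iff)

lemma symm_sum: "(\<And>k. k \<in> K \<Longrightarrow> symm (Y k)) \<Longrightarrow> symm (\<Sum>k\<in>K. Y k)"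
  by (induction K rule: infinite_finite_induct) (auto simp: symm_add symm_def transpose_def vec_eq_iff)

lemma symm_mat: "symm (mat c)"
  by (simp add: symm_def transpose_def vec_eq_iff mat_def)

lemma symm_adjA: "(\<And>i. symm (A i)) \<Longrightarrow> symm (adjA A y)"
  unfolding adjA_def by (intro symm_sum symm_scaleR) auto

lemma symm_inner_mult: "symm M \<Longrightarrow> x \<bullet> (M *v y) = (M *v x) \<bullet> y"
  by (metis dot_lmul_matrix inner_commute symm_def vector_transpose_matrix)

lemma psd_scaleR: "psd X \<Longrightarrow> 0 \<le> c \<Longrightarrow> psd (c *\<^sub>R X)"
  by (simp add: psd_def scaleR_matrix_vector_assoc[symmetric])

lemma pd_imp_psd: "pd X \<Longrightarrow> psd X"
  unfolding pd_def psd_def by (metis inner_zero_left order.refl less_imp_le)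

lemma psd_iff_tinner_outer: "psd M \<longleftrightarrow> (\<forall>v. 0 \<le> tinner M (outer v v))"
  by (simp add: psd_def tinner_outer)

lemma inner_opA: "a \<bullet> opA A X = tinner (adjA A a) X"
  by (simp add: opA_def adjA_def inner_vec_def tinner_sum_left tinner_scaleR_left)

lemma linear_opA: "linear (opA A)"
  by (rule linearI) (simp_all add: opA_def vec_eq_iff tinner_add_right tinner_scaleR_right)

lemma adjA_scaleR: "adjA A (c *\<^sub>R y) = c *\<^sub>R adjA A y"
  by (simp add: adjA_def scaleR_sum_right)

lemma adjA_uminus: "adjA A (- y) = - adjA A y"
  using adjA_scaleR[of A "- 1" y] by simp

section \<open>The spectral theorem for symmetric matrices\<close>

definition orthonormal_eigenvectors :: "real^'n^'n \<Rightarrow> (real^'n) set \<Rightarrow> bool" where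
  "orthonormal_eigenvectors M B \<longleftrightarrow> finite B \<and> (\<forall>b\<in>B. norm b = 1) \<and> pairwise orthogonal B \<and>
     (\<forall>b\<in>B. \<exists>l. M *v b = l *\<^sub>R b)"

definition orthonormal_eigenbasis :: "real^'n^'n \<Rightarrow> (real^'n) set \<Rightarrow> bool" where
  "orthonormal_eigenbasis M B \<longleftrightarrow> orthonormal_eigenvectors M B \<and> (\<forall>v. (\<Sum>b\<in>B. (b \<bullet> v) *\<^sub>R b) = v)"

lemma linear_coeff_eq_0_if_quadratic_nonpos:
  fixes a c :: real
  assumes "\<And>t. 2 * t * a + t\<^sup>2 * c \<le> 0"
  shows "a = 0"
proof (rule ccontr)
  assume "a \<noteq> 0"
  define s where "s = 1 / (\<bar>c\<bar> + 1)"
  have s: "s > 0" "\<bar>s * c\<bar> < 1"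
    unfolding s_def by (auto simp: field_simps abs_mult)
  have "(s * a\<^sup>2) * (2 + s * c) \<le> 0"
    using assms[of "s * a"] by (simp add: power2_eq_square algebra_simps)
  moreover have "(s * a\<^sup>2) * (2 + s * c) > 0"
    using s \<open>a \<noteq> 0\<close> by (intro mult_pos_pos) (auto simp: abs_less_iff)
  ultimately show False by linarith
qed

text \<open>The first variation of the Rayleigh quotient at the maximiser vanishes in every direction of
  \<open>W\<close>, and invariance puts the residual \<open>M u - \<mu> u\<close> into \<open>W\<close>.\<close>

lemma rayleigh_maximizer_is_eigenvector:
  fixes M :: "real^'n^'n"
  assumes symM: "symm M" and W: "subspace W" and inv: "\<And>w. w \<in> W \<Longrightarrow> M *v w \<in> W"
    and uW: "u \<in> W" and u1: "u \<bullet> u = 1"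
    and max: "\<And>v. v \<in> W \<Longrightarrow> v \<bullet> (M *v v) \<le> (u \<bullet> (M *v u)) * (v \<bullet> v)"
  shows "M *v u = (u \<bullet> (M *v u)) *\<^sub>R u"
proof -
  define \<mu> where "\<mu> = u \<bullet> (M *v u)"
  define g where "g = M *v u - \<mu> *\<^sub>R u"
  have orth: "w \<bullet> g = 0" if wW: "w \<in> W" for w
  proof (rule linear_coeff_eq_0_if_quadratic_nonpos)
    fix t :: real
    have "(u + t *\<^sub>R w) \<bullet> (M *v (u + t *\<^sub>R w)) \<le> \<mu> * ((u + t *\<^sub>R w) \<bullet> (u + t *\<^sub>R w))"
      using max[of "u + t *\<^sub>R w"] uW wW W unfolding \<mu>_def
      by (simp add: subspace_add subspace_scale)
    moreover have "u \<bullet> (M *v w) = w \<bullet> (M *v u)"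
      by (metis symm_inner_mult[OF symM] inner_commute)
    ultimately show "2 * t * (w \<bullet> g) + t\<^sup>2 * (w \<bullet> (M *v w) - \<mu> * (w \<bullet> w)) \<le> 0"
      by (simp add: g_def matrix_vector_right_distrib matrix_vector_mult_scaleR inner_add_left
          inner_add_right inner_diff_right inner_commute[of u w] u1 \<mu>_def[symmetric]
          power2_eq_square algebra_simps)
  qed
  have "g \<in> W"
    unfolding g_def using W inv uW by (simp add: subspace_diff subspace_scale)
  then have "g \<bullet> g = 0" using orth by blast
  then have "g = 0" by simp
  then show ?thesis by (simp add: g_def \<mu>_def)
qed

lemma symm_invariant_subspace_has_eigenvector:
  fixes M :: "real^'n^'n"
  assumes symM: "symm M" and W: "subspace W" and nz: "W \<noteq> {0}"
    and inv: "\<And>w. w \<in> W \<Longrightarrow> M *v w \<in> W"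
  obtains u where "u \<in> W" "norm u = 1" "M *v u = (u \<bullet> (M *v u)) *\<^sub>R u"
proof -
  define S where "S = sphere 0 1 \<inter> W"
  have cS: "compact S"
    unfolding S_def by (rule compact_Int_closed[OF compact_sphere closed_subspace[OF W]])
  obtain x where "x \<in> W" "x \<noteq> 0" using nz subspace_0[OF W] by auto
  then have "x /\<^sub>R norm x \<in> S" using W by (simp add: S_def subspace_scale)
  then have neS: "S \<noteq> {}" by auto
  have "continuous_on S (\<lambda>w. w \<bullet> (M *v w))" by (intro continuous_intros)
  then obtain u where uS: "u \<in> S" and umax: "\<And>w. w \<in> S \<Longrightarrow> w \<bullet> (M *v w) \<le> u \<bullet> (M *v u)"
    using continuous_attains_sup[OF cS neS] by blast
  have uW: "u \<in> W" and nu: "norm u = 1" using uS by (auto simp: S_def)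
  have "v \<bullet> (M *v v) \<le> (u \<bullet> (M *v u)) * (v \<bullet> v)" if "v \<in> W" for v
  proof (cases "v = 0")
    case False
    have "v /\<^sub>R norm v \<in> S" using False that W by (simp add: S_def subspace_scale)
    then have "(v /\<^sub>R norm v) \<bullet> (M *v (v /\<^sub>R norm v)) \<le> u \<bullet> (M *v u)" by (rule umax)
    moreover have "(v /\<^sub>R norm v) \<bullet> (M *v (v /\<^sub>R norm v)) = (v \<bullet> (M *v v)) / (v \<bullet> v)"
      by (simp add: matrix_vector_mult_scaleR power2_norm_eq_inner[symmetric] power2_eq_square
          divide_inverse)
    ultimately show ?thesis
      using False by (simp add: divide_le_eq mult.commute)
  qed simp
  moreover have "u \<bullet> u = 1" using nu by (simp add: norm_eq_1)
  ultimately have "M *v u = (u \<bullet> (M *v u)) *\<^sub>R u"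
    using rayleigh_maximizer_is_eigenvector[OF symM W inv uW] by blast
  then show ?thesis using that uW nu by blast
qed

lemma orthonormal_eigenvectors_extend:
  fixes M :: "real^'n^'n"
  assumes symM: "symm M" and B: "orthonormal_eigenvectors M B" and sp: "span B \<noteq> UNIV"
  obtains u where "u \<notin> B" "orthonormal_eigenvectors M (insert u B)"
proof -
  define W where "W = {w. \<forall>b\<in>B. orthogonal b w}"
  have W: "subspace W" unfolding W_def by (rule subspace_orthogonal_to_vectors)
  have inv: "M *v w \<in> W" if "w \<in> W" for w
  proof -
    have "b \<bullet> (M *v w) = 0" if bB: "b \<in> B" for b
    proof -
      obtain l where "M *v b = l *\<^sub>R b" using B bB unfolding orthonormal_eigenvectors_def by blast
      then have "(M *v b) \<bullet> w = l * (b \<bullet> w)" by simp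
      moreover have "b \<bullet> w = 0" using \<open>w \<in> W\<close> bB by (simp add: W_def orthogonal_def)
      ultimately show ?thesis using symm_inner_mult[OF symM, of b w] by simp
    qed
    then show ?thesis by (simp add: W_def orthogonal_def)
  qed
  have "span B \<subset> span UNIV" using sp by (simp add: span_UNIV psubset_eq)
  then obtain x where "x \<noteq> 0" "\<And>y. y \<in> span B \<Longrightarrow> orthogonal x y"
    by (metis orthogonal_to_subspace_exists_gen)
  then have "x \<in> W" "x \<noteq> 0"
    by (auto simp: W_def orthogonal_commute span_base)
  then have "W \<noteq> {0}" by auto
  then obtain u where u: "u \<in> W" "norm u = 1" "M *v u = (u \<bullet> (M *v u)) *\<^sub>R u"
    using symm_invariant_subspace_has_eigenvector[OF symM W _ inv] by blast
  have "u \<notin> B" using u by (auto simp: W_def orthogonal_def norm_eq_1)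
  moreover have "pairwise orthogonal (insert u B)"
    using B u(1) by (auto simp: pairwise_insert orthonormal_eigenvectors_def W_def orthogonal_commute)
  moreover have "\<exists>l. M *v u = l *\<^sub>R u" using u(3) by blast
  ultimately show ?thesis
    using that B u(2) by (simp add: orthonormal_eigenvectors_def)
qed

lemma orthonormal_eigenvectors_card: "orthonormal_eigenvectors M B \<Longrightarrow> card B \<le> CARD('n)"
  for M :: "real^'n^'n"
proof -
  assume B: "orthonormal_eigenvectors M B"
  then have "0 \<notin> B" by (auto simp: orthonormal_eigenvectors_def)
  with B have "independent B"
    by (intro pairwise_orthogonal_independent) (simp_all add: orthonormal_eigenvectors_def)
  then show ?thesis using independent_bound[of B] by simp
qed

lemma symm_orthonormal_eigenvectors_span:
  fixes M :: "real^'n^'n"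
  assumes "symm M"
  obtains B where "orthonormal_eigenvectors M B" "span B = UNIV"
proof -
  have "orthonormal_eigenvectors M {}" by (simp add: orthonormal_eigenvectors_def)
  moreover have "\<forall>B. orthonormal_eigenvectors M B \<longrightarrow> card B < CARD('n) + 1"
    using orthonormal_eigenvectors_card by (metis less_Suc_eq_le Suc_eq_plus1)
  ultimately obtain B where B: "orthonormal_eigenvectors M B"
    and maxcard: "\<And>B'. orthonormal_eigenvectors M B' \<Longrightarrow> card B' \<le> card B"
    using ex_has_greatest_nat[of "orthonormal_eigenvectors M" "{}" card] by blast
  have "span B = UNIV"
  proof (rule ccontr)
    assume "span B \<noteq> UNIV"
    then obtain u where "u \<notin> B" "orthonormal_eigenvectors M (insert u B)"
      using orthonormal_eigenvectors_extend[OF assms B] by blast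
    moreover have "finite B" using B by (simp add: orthonormal_eigenvectors_def)
    ultimately show False using maxcard by fastforce
  qed
  then show ?thesis using that B by blast
qed

lemma orthonormal_sum_coeff:
  assumes "finite B" "\<forall>b\<in>B. norm b = 1" "pairwise orthogonal B" "c \<in> B"
  shows "c \<bullet> (\<Sum>b\<in>B. f b *\<^sub>R b) = f c"
proof -
  have "c \<bullet> (\<Sum>b\<in>B. f b *\<^sub>R b) = (\<Sum>b\<in>B. f b * (c \<bullet> b))"
    by (simp add: inner_sum_right)
  also have "\<dots> = f c * (c \<bullet> c) + (\<Sum>b\<in>B-{c}. f b * (c \<bullet> b))"
    using assms by (simp add: sum.remove)
  also have "(\<Sum>b\<in>B-{c}. f b * (c \<bullet> b)) = 0"
    using assms(3,4) by (intro sum.neutral) (auto simp: pairwise_def orthogonal_def)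
  finally show ?thesis using assms(2,4) by (simp add: norm_eq_1)
qed

theorem symm_has_orthonormal_eigenbasis:
  fixes M :: "real^'n^'n"
  assumes "symm M"
  obtains B where "orthonormal_eigenbasis M B"
proof -
  obtain B where B: "orthonormal_eigenvectors M B" and sp: "span B = UNIV"
    using symm_orthonormal_eigenvectors_span[OF assms] by blast
  have "(\<Sum>b\<in>B. (b \<bullet> v) *\<^sub>R b) = v" for v
  proof -
    define r where "r = v - (\<Sum>b\<in>B. (b \<bullet> v) *\<^sub>R b)"
    have "orthogonal r c" if "c \<in> B" for c
      using orthonormal_sum_coeff[of B c "\<lambda>b. b \<bullet> v"] B that
      by (simp add: r_def orthonormal_eigenvectors_def orthogonal_def inner_diff_left
          inner_commute[of v c] inner_commute[of "\<Sum>b\<in>B. (b \<bullet> v) *\<^sub>R b" c])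
    moreover have "r \<in> span B" using sp by simp
    ultimately have "orthogonal r r" by (rule_tac orthogonal_to_span)
    then show ?thesis unfolding orthogonal_self r_def by simp
  qed
  then show ?thesis using that B unfolding orthonormal_eigenbasis_def by blast
qed

lemma orthonormal_eigenbasisD:
  assumes "orthonormal_eigenbasis M B"
  shows "finite B" and "b \<in> B \<Longrightarrow> norm b = 1" and "b \<in> B \<Longrightarrow> M *v b = (b \<bullet> (M *v b)) *\<^sub>R b"
    and "(\<Sum>b\<in>B. (b \<bullet> v) *\<^sub>R b) = v"
proof -
  show "finite B" "b \<in> B \<Longrightarrow> norm b = 1" "(\<Sum>b\<in>B. (b \<bullet> v) *\<^sub>R b) = v"
    using assms by (auto simp: orthonormal_eigenbasis_def orthonormal_eigenvectors_def)
  assume "b \<in> B"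
  with assms obtain l where "M *v b = l *\<^sub>R b" "norm b = 1"
    unfolding orthonormal_eigenbasis_def orthonormal_eigenvectors_def by blast
  then show "M *v b = (b \<bullet> (M *v b)) *\<^sub>R b" by (simp add: norm_eq_1)
qed

lemma sum_matrix_vector_mult: "(\<Sum>k\<in>K. A k) *v x = (\<Sum>k\<in>K. A k *v x)"
  for x :: "real^'n"
  by (induction K rule: infinite_finite_induct) (simp_all add: matrix_vector_mult_add_rdistrib)

lemma uminus_matrix_vector_mult: "(- A) *v v = - (A *v v)"
  for A :: "real^'n^'m"
  by (simp add: matrix_vector_mult_def vec_eq_iff sum_negf)

lemma orthonormal_eigenbasis_nonempty:
  fixes M :: "real^'n^'n"
  assumes "orthonormal_eigenbasis M B"
  shows "B \<noteq> {}"
proof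
  assume "B = {}"
  then have "(vec 1 :: real^'n) = 0" using orthonormal_eigenbasisD(4)[OF assms, of "vec 1"] by simp
  then show False by (simp add: vec_eq_iff)
qed

lemma matrix_vector_mult_eigenbasis:
  assumes "orthonormal_eigenbasis M B"
  shows "M *v v = (\<Sum>b\<in>B. ((b \<bullet> (M *v b)) * (b \<bullet> v)) *\<^sub>R b)"
proof -
  have "M *v v = (\<Sum>b\<in>B. (b \<bullet> v) *\<^sub>R (M *v b))"
    by (subst (1) orthonormal_eigenbasisD(4)[OF assms, of v, symmetric])
      (simp add: linear_sum[OF matrix_vector_mul_linear] matrix_vector_mult_scaleR)
  also have "\<dots> = (\<Sum>b\<in>B. ((b \<bullet> (M *v b)) * (b \<bullet> v)) *\<^sub>R b)"
    by (intro sum.cong refl) (subst orthonormal_eigenbasisD(3)[OF assms], simp_all)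
  finally show ?thesis .
qed

lemma eigenbasis_decomposition:
  assumes "orthonormal_eigenbasis M B"
  shows "M = (\<Sum>b\<in>B. (b \<bullet> (M *v b)) *\<^sub>R outer b b)"
  unfolding matrix_eq
proof
  fix x
  show "M *v x = (\<Sum>b\<in>B. (b \<bullet> (M *v b)) *\<^sub>R outer b b) *v x"
    by (simp add: sum_matrix_vector_mult scaleR_matrix_vector_assoc[symmetric] outer_mult_vector
        matrix_vector_mult_eigenbasis[OF assms, of x])
qed

lemma eigenbasis_resolution_of_identity:
  assumes "orthonormal_eigenbasis M B"
  shows "mat 1 = (\<Sum>b\<in>B. outer b b)"
  unfolding matrix_eq
  by (simp add: sum_matrix_vector_mult outer_mult_vector orthonormal_eigenbasisD(4)[OF assms])

lemma tinner_eigenbasis: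
  assumes "orthonormal_eigenbasis X B"
  shows "tinner Z X = (\<Sum>b\<in>B. (b \<bullet> (X *v b)) * (b \<bullet> (Z *v b)))"
  by (subst eigenbasis_decomposition[OF assms])
    (simp add: tinner_sum_right tinner_scaleR_right tinner_outer)

lemma trace_eigenbasis:
  assumes "orthonormal_eigenbasis X B"
  shows "trace Z = (\<Sum>b\<in>B. b \<bullet> (Z *v b))"
proof -
  have "trace Z = tinner Z (\<Sum>b\<in>B. outer b b)"
    by (simp add: tinner_mat_1 eigenbasis_resolution_of_identity[OF assms, symmetric])
  then show ?thesis by (simp add: tinner_sum_right tinner_outer)
qed

lemma tinner_psd_nonneg:
  assumes "psd Z" "psd X" "symm X"
  shows "0 \<le> tinner Z X"
proof -
  obtain B where "orthonormal_eigenbasis X B" using symm_has_orthonormal_eigenbasis[OF assms(3)] .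
  then show ?thesis
    using assms(1,2) by (simp add: tinner_eigenbasis psd_def sum_nonneg)
qed

lemma pd_trace_bound:
  assumes "symm X" "pd X"
  obtains \<mu> where "0 < \<mu>" "\<And>Z. psd Z \<Longrightarrow> \<mu> * trace Z \<le> tinner Z X"
proof -
  obtain B where B: "orthonormal_eigenbasis X B" using symm_has_orthonormal_eigenbasis[OF assms(1)] .
  have fin: "finite B" and ne: "B \<noteq> {}"
    using orthonormal_eigenbasisD(1)[OF B] orthonormal_eigenbasis_nonempty[OF B] .
  define \<mu> where "\<mu> = Min ((\<lambda>b. b \<bullet> (X *v b)) ` B)"
  have "0 < b \<bullet> (X *v b)" if "b \<in> B" for b
    using assms(2) orthonormal_eigenbasisD(2)[OF B that] by (metis pd_def norm_zero zero_neq_one)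
  then have "0 < \<mu>" unfolding \<mu>_def using fin ne by simp
  moreover have "\<mu> * trace Z \<le> tinner Z X" if "psd Z" for Z
  proof -
    have "\<mu> * trace Z = (\<Sum>b\<in>B. \<mu> * (b \<bullet> (Z *v b)))"
      by (simp add: trace_eigenbasis[OF B] sum_distrib_left)
    also have "\<dots> \<le> (\<Sum>b\<in>B. (b \<bullet> (X *v b)) * (b \<bullet> (Z *v b)))"
      using fin \<open>psd Z\<close> unfolding \<mu>_def psd_def by (intro sum_mono mult_right_mono) auto
    also have "\<dots> = tinner Z X" by (rule tinner_eigenbasis[OF B, symmetric])
    finally show ?thesis .
  qed
  ultimately show ?thesis using that by blast
qed

lemma psd_eq_0_if_trace_nonpos:
  assumes "symm M" "psd M" "trace M \<le> 0"
  shows "M = 0"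
proof -
  obtain B where B: "orthonormal_eigenbasis M B" using symm_has_orthonormal_eigenbasis[OF assms(1)] .
  have nonneg: "\<forall>b\<in>B. 0 \<le> b \<bullet> (M *v b)" using assms(2) by (simp add: psd_def)
  have "0 \<le> (\<Sum>b\<in>B. b \<bullet> (M *v b))" using nonneg by (simp add: sum_nonneg)
  then have "(\<Sum>b\<in>B. b \<bullet> (M *v b)) = 0"
    using assms(3) trace_eigenbasis[OF B, of M] by linarith
  then have "\<forall>b\<in>B. b \<bullet> (M *v b) = 0"
    by (simp add: sum_nonneg_eq_0_iff[OF orthonormal_eigenbasisD(1)[OF B]] nonneg)
  then have "(\<Sum>b\<in>B. (b \<bullet> (M *v b)) *\<^sub>R outer b b) = 0" by simp
  then show ?thesis by (rule trans[OF eigenbasis_decomposition[OF B]])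
qed

lemma eigenvalues_eq_eigenbasis:
  assumes "symm M" "orthonormal_eigenbasis M B"
  shows "{l. \<exists>v. v \<noteq> 0 \<and> M *v v = l *\<^sub>R v} = (\<lambda>b. b \<bullet> (M *v b)) ` B"
proof (intro equalityI subsetI)
  fix l assume "l \<in> {l. \<exists>v. v \<noteq> 0 \<and> M *v v = l *\<^sub>R v}"
  then obtain v where v: "v \<noteq> 0" "M *v v = l *\<^sub>R v" by blast
  obtain b where b: "b \<in> B" "b \<bullet> v \<noteq> 0"
    using orthonormal_eigenbasisD(4)[OF assms(2), of v] v(1) by (metis (no_types, lifting) sum.neutral scaleR_zero_left)
  have "l * (b \<bullet> v) = b \<bullet> (M *v v)" using v(2) by simp
  also have "\<dots> = (M *v b) \<bullet> v" by (rule symm_inner_mult[OF assms(1)])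
  also have "\<dots> = (b \<bullet> (M *v b)) * (b \<bullet> v)"
    by (subst orthonormal_eigenbasisD(3)[OF assms(2) b(1)]) simp
  finally have "l = b \<bullet> (M *v b)" using b(2) by simp
  then show "l \<in> (\<lambda>b. b \<bullet> (M *v b)) ` B" using b(1) by blast
next
  fix l assume "l \<in> (\<lambda>b. b \<bullet> (M *v b)) ` B"
  then obtain b where "b \<in> B" "l = b \<bullet> (M *v b)" by blast
  moreover have "b \<noteq> 0" using orthonormal_eigenbasisD(2)[OF assms(2) \<open>b \<in> B\<close>] by auto
  ultimately show "l \<in> {l. \<exists>v. v \<noteq> 0 \<and> M *v v = l *\<^sub>R v}"
    using orthonormal_eigenbasisD(3)[OF assms(2)] by blast
qed

lemma lambda_max_eigenbasis:
  assumes "symm M" "orthonormal_eigenbasis M B"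
  shows "lambda_max M = Max ((\<lambda>b. b \<bullet> (M *v b)) ` B)"
  unfolding lambda_max_def eigenvalues_eq_eigenbasis[OF assms] ..

lemma lambda_max_eigenvector:
  assumes "symm M"
  obtains v where "v \<noteq> 0" "M *v v = lambda_max M *\<^sub>R v"
proof -
  obtain B where B: "orthonormal_eigenbasis M B" using symm_has_orthonormal_eigenbasis[OF assms] .
  have "lambda_max M \<in> (\<lambda>b. b \<bullet> (M *v b)) ` B"
    unfolding lambda_max_eigenbasis[OF assms B]
    using orthonormal_eigenbasisD(1)[OF B] orthonormal_eigenbasis_nonempty[OF B] by simp
  then have "lambda_max M \<in> {l. \<exists>v. v \<noteq> 0 \<and> M *v v = l *\<^sub>R v}"
    unfolding eigenvalues_eq_eigenbasis[OF assms B] .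
  then show ?thesis using that by blast
qed

lemma inner_mult_le_lambda_max:
  assumes "symm M"
  shows "v \<bullet> (M *v v) \<le> lambda_max M * (v \<bullet> v)"
proof -
  obtain B where B: "orthonormal_eigenbasis M B" using symm_has_orthonormal_eigenbasis[OF assms] .
  let ?L = "lambda_max M"
  have le: "b \<bullet> (M *v b) \<le> ?L" if "b \<in> B" for b
    unfolding lambda_max_eigenbasis[OF assms B] using orthonormal_eigenbasisD(1)[OF B] that by simp
  have "v \<bullet> (M *v v) = (\<Sum>b\<in>B. (b \<bullet> (M *v b)) * ((b \<bullet> v) * (v \<bullet> b)))"
    by (simp add: matrix_vector_mult_eigenbasis[OF B, of v] inner_sum_right mult.assoc)
  also have "\<dots> \<le> (\<Sum>b\<in>B. ?L * ((b \<bullet> v) * (v \<bullet> b)))"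
    using le by (intro sum_mono mult_right_mono) (simp, metis inner_commute zero_le_square)
  also have "\<dots> = ?L * (v \<bullet> (\<Sum>b\<in>B. (b \<bullet> v) *\<^sub>R b))"
    by (simp add: inner_sum_right sum_distrib_left)
  also have "\<dots> = ?L * (v \<bullet> v)" by (simp only: orthonormal_eigenbasisD(4)[OF B])
  finally show ?thesis .
qed

lemma psd_add_shift:
  assumes "symm X" "lambda_max (- X) \<le> t"
  shows "psd (X + t *\<^sub>R mat 1)"
  unfolding psd_def
proof
  fix v
  have "- (v \<bullet> (X *v v)) \<le> lambda_max (- X) * (v \<bullet> v)"
    using inner_mult_le_lambda_max[OF symm_uminus[OF assms(1)], of v]
    by (simp add: uminus_matrix_vector_mult)
  also have "\<dots> \<le> t * (v \<bullet> v)" using assms(2) by (simp add: mult_right_mono)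
  finally show "0 \<le> v \<bullet> ((X + t *\<^sub>R mat 1) *v v)"
    by (simp add: matrix_vector_mult_add_rdistrib scaleR_matrix_vector_assoc[symmetric] inner_add_right)
qed

lemma psd_iff_lambda_max_uminus_nonpos:
  assumes "symm X"
  shows "psd X \<longleftrightarrow> lambda_max (- X) \<le> 0"
proof
  assume "psd X"
  obtain v where v: "v \<noteq> 0" "(- X) *v v = lambda_max (- X) *\<^sub>R v"
    using lambda_max_eigenvector[OF symm_uminus[OF assms]] .
  have "lambda_max (- X) * (v \<bullet> v) = - (v \<bullet> (X *v v))"
    using arg_cong[OF v(2), of "inner v"] by (simp add: uminus_matrix_vector_mult)
  also have "\<dots> \<le> 0" using \<open>psd X\<close> by (simp add: psd_def)
  finally have "lambda_max (- X) * (v \<bullet> v) \<le> 0" .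
  moreover have "0 < v \<bullet> v" using v(1) by simp
  ultimately show "lambda_max (- X) \<le> 0" by (simp add: mult_le_0_iff)
next
  assume "lambda_max (- X) \<le> 0"
  then show "psd X" using psd_add_shift[OF assms, of 0] by simp
qed

section \<open>Duality\<close>

lemma tinner_objective_split:
  assumes "Z + adjA A y = C" "opA A X = b"
  shows "tinner C X = tinner Z X + b \<bullet> y"
proof -
  have "tinner C X = tinner Z X + tinner (adjA A y) X"
    using assms(1)[symmetric] by (simp add: tinner_add_left)
  also have "tinner (adjA A y) X = b \<bullet> y"
    using assms(2) inner_opA[of y A X] by (simp add: inner_commute)
  finally show ?thesis .
qed

lemma weak_duality:
  assumes "primal_feasible A b X" "dual_feasible C A y Z"
  shows "b \<bullet> y \<le> tinner C X"
  using assms tinner_objective_split[of Z A y C X b] tinner_psd_nonneg[of Z X]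
  by (simp add: primal_feasible_def dual_feasible_def)

lemma nonneg_if_affine_nonneg_on_pos:
  fixes c d :: real
  assumes nonneg: "\<And>t. 0 < t \<Longrightarrow> 0 \<le> c + d * t"
  shows "0 \<le> c" and "0 \<le> d"
proof -
  have "((\<lambda>t. c + d * t) \<longlongrightarrow> c) (at_right 0)"
    by (auto intro!: tendsto_eq_intros)
  moreover have "\<forall>\<^sub>F t in at_right 0. 0 \<le> c + d * t"
    using eventually_at_right_less by (rule eventually_mono) (rule nonneg)
  ultimately show "0 \<le> c" by (rule tendsto_lowerbound) simp
  show "0 \<le> d"
  proof (rule ccontr)
    assume "\<not> 0 \<le> d"
    define t where "t = (\<bar>c\<bar> + 1) / - d"
    have "0 < t" "d * t = - (\<bar>c\<bar> + 1)" using \<open>\<not> 0 \<le> d\<close> by (simp_all add: t_def divide_pos_neg)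
    then show False using nonneg[of t] by linarith
  qed
qed

lemma convex_psd: "convex {X :: real^'n^'n. symm X \<and> psd X}"
  unfolding convex_def
  by (auto simp: psd_def symm_add symm_scaleR matrix_vector_mult_add_rdistrib
      scaleR_matrix_vector_assoc[symmetric] inner_add_right)

lemma psd_eq_0_if_tinner_pd_nonpos:
  assumes "symm M" "psd M" "symm X" "pd X" "tinner M X \<le> 0"
  shows "M = 0"
proof -
  obtain \<mu> where "0 < \<mu>" and bound: "\<And>Z. psd Z \<Longrightarrow> \<mu> * trace Z \<le> tinner Z X"
    using pd_trace_bound[OF assms(3,4)] by metis
  then have "\<mu> * trace M \<le> 0" using bound[OF assms(2)] assms(5) by linarith
  then have "trace M \<le> 0" using \<open>0 < \<mu>\<close> by (simp add: mult_le_0_iff)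
  then show ?thesis by (rule psd_eq_0_if_trace_nonpos[OF assms(1,2)])
qed

lemma separating_functional:
  assumes lower: "\<And>X. primal_feasible A b X \<Longrightarrow> p \<le> tinner C X"
  obtains a a0 where "(a, a0) \<noteq> 0"
    "\<And>X t. symm X \<Longrightarrow> psd X \<Longrightarrow> 0 < t \<Longrightarrow>
       0 \<le> tinner (adjA A a + a0 *\<^sub>R C) X - (a \<bullet> b + a0 * p) + a0 * t"
proof -
  define g where "g = (\<lambda>(X, t). (opA A X, tinner C X + t))"
  define S where "S = (+) (- b, - p) ` g ` ({X. symm X \<and> psd X} \<times> {0<..})"
  have "linear g"
    by (rule linearI)
      (auto simp: g_def linear_add[OF linear_opA] linear_scale[OF linear_opA]
        tinner_add_right tinner_scaleR_right algebra_simps)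
  then have "convex S"
    unfolding S_def by (intro convex_translation convex_linear_image convex_Times convex_psd) auto
  moreover have "0 \<notin> S"
  proof
    assume "0 \<in> S"
    then obtain X t where "symm X" "psd X" "0 < t" "opA A X = b" "tinner C X + t = p"
      by (auto simp: S_def g_def zero_prod_def)
    then show False using lower[of X] by (simp add: primal_feasible_def)
  qed
  ultimately obtain w where "w \<noteq> 0" and sep: "\<forall>x\<in>S. 0 \<le> w \<bullet> x"
    using separating_hyperplane_set_0 by blast
  obtain a a0 where w: "w = (a, a0)" by (cases w)
  have "(a, a0) \<noteq> 0" using \<open>w \<noteq> 0\<close> w by simp
  moreover have "0 \<le> tinner (adjA A a + a0 *\<^sub>R C) X - (a \<bullet> b + a0 * p) + a0 * t"
    if "symm X" "psd X" "0 < t" for X t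
  proof -
    have "(- b, - p) + g (X, t) \<in> S" using that unfolding S_def by blast
    then have "0 \<le> (a, a0) \<bullet> ((- b, - p) + g (X, t))" using sep w by blast
    then have "0 \<le> a \<bullet> (opA A X - b) + a0 * (tinner C X + t - p)"
      by (simp add: g_def)
    then show ?thesis
      by (simp add: inner_diff_right inner_opA tinner_add_left tinner_scaleR_left algebra_simps)
  qed
  ultimately show ?thesis by (rule that)
qed

text \<open>Slater's condition makes the separating functional non-vertical (\<open>a0 > 0\<close>); rescaling it
  gives a dual feasible point whose value is at least \<open>p\<close>.\<close>

theorem strong_duality:
  fixes C :: "real^'n^'n" and A :: "'m::finite \<Rightarrow> real^'n^'n"
  assumes symC: "symm C" and symA: "\<And>i. symm (A i)"
    and indep: "\<And>y. (\<Sum>i\<in>UNIV. (y $ i) *\<^sub>R A i) = 0 \<Longrightarrow> y = 0"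
    and X0: "symm X0" "opA A X0 = b" "pd X0"
    and lower: "\<And>X. primal_feasible A b X \<Longrightarrow> p \<le> tinner C X"
  obtains y Z where "dual_feasible C A y Z" "p \<le> b \<bullet> y"
proof -
  obtain a a0 where nz: "(a, a0) \<noteq> 0" and sep: "\<And>X t. symm X \<Longrightarrow> psd X \<Longrightarrow> 0 < t \<Longrightarrow>
       0 \<le> tinner (adjA A a + a0 *\<^sub>R C) X - (a \<bullet> b + a0 * p) + a0 * t"
    using separating_functional[OF lower] by blast
  define N where "N = adjA A a + a0 *\<^sub>R C"
  have symN: "symm N" unfolding N_def by (intro symm_add symm_scaleR symm_adjA symA symC)
  have "symm (0 :: real^'n^'n)" "psd (0 :: real^'n^'n)" "tinner N 0 = 0"
    by (simp_all add: symm_def transpose_def vec_eq_iff psd_def tinner_eq_sum)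
  then have affine: "0 \<le> - (a \<bullet> b + a0 * p) + a0 * t" if "0 < t" for t
    using sep[of 0 t] that by (simp add: N_def)
  have ab: "a \<bullet> b + a0 * p \<le> 0" using nonneg_if_affine_nonneg_on_pos(1)[OF affine] by simp
  have a0: "0 \<le> a0" using nonneg_if_affine_nonneg_on_pos(2)[OF affine] .
  have N_nonneg: "0 \<le> tinner N X" if "symm X" "psd X" for X
  proof (rule nonneg_if_affine_nonneg_on_pos(2))
    fix s :: real assume "0 < s"
    then show "0 \<le> (a0 - (a \<bullet> b + a0 * p)) + tinner N X * s"
      using sep[of "s *\<^sub>R X" 1] that
      by (simp add: N_def symm_scaleR psd_scaleR tinner_scaleR_right algebra_simps)
  qed
  have psdN: "psd N"
    unfolding psd_iff_tinner_outer using N_nonneg symm_outer psd_outer by blast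
  have "a0 \<noteq> 0"
  proof
    assume "a0 = 0"
    then have "tinner N X0 \<le> 0" using ab X0(2) by (simp add: N_def inner_opA[symmetric] inner_commute)
    then have "adjA A a = 0"
      using psd_eq_0_if_tinner_pd_nonpos[OF symN psdN X0(1,3)] \<open>a0 = 0\<close> by (simp add: N_def)
    then show False using indep[of a] nz \<open>a0 = 0\<close> by (simp add: adjA_def zero_prod_def)
  qed
  with a0 have "0 < a0" by simp
  define y where "y = (- 1 / a0) *\<^sub>R a"
  have "(1 / a0) *\<^sub>R N + adjA A y = C"
    using \<open>0 < a0\<close> by (simp add: y_def N_def adjA_scaleR adjA_uminus algebra_simps)
  then have "dual_feasible C A y ((1 / a0) *\<^sub>R N)"
    using symN psdN \<open>0 < a0\<close> by (simp add: dual_feasible_def symm_scaleR psd_scaleR)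
  moreover have "p \<le> b \<bullet> y"
    using ab \<open>0 < a0\<close> by (simp add: y_def inner_commute field_simps)
  ultimately show ?thesis using that by blast
qed

corollary zero_duality_gap:
  fixes C :: "real^'n^'n" and A :: "'m::finite \<Rightarrow> real^'n^'n"
  assumes symC: "symm C" and symA: "\<And>i. symm (A i)"
    and indep: "\<And>y. (\<Sum>i\<in>UNIV. (y $ i) *\<^sub>R A i) = 0 \<Longrightarrow> y = 0"
    and X0: "symm X0" "opA A X0 = b" "pd X0"
    and dual0: "dual_feasible C A y0 Z0"
  obtains y Z where "dual_feasible C A y Z"
    "\<And>c. (\<And>X. primal_feasible A b X \<Longrightarrow> c \<le> tinner C X) \<Longrightarrow> c \<le> b \<bullet> y"
proof -
  define P where "P = {tinner C X | X. primal_feasible A b X}"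
  have "primal_feasible A b X0" using X0 pd_imp_psd by (simp add: primal_feasible_def)
  then have "P \<noteq> {}" by (auto simp: P_def)
  have "bdd_below P"
    using weak_duality[OF _ dual0] by (auto simp: P_def intro!: bdd_belowI)
  then have "Inf P \<le> tinner C X" if "primal_feasible A b X" for X
    using that by (auto simp: P_def intro!: cInf_lower)
  then obtain y Z where "dual_feasible C A y Z" "Inf P \<le> b \<bullet> y"
    using strong_duality[OF symC symA indep X0] by blast
  moreover have "c \<le> Inf P" if "\<And>X. primal_feasible A b X \<Longrightarrow> c \<le> tinner C X" for c
    using \<open>P \<noteq> {}\<close> that by (auto simp: P_def intro!: cInf_greatest)
  ultimately show ?thesis using that by force
qed

lemma bdd_above_dual_opt_trace:
  assumes "symm X0" "opA A X0 = b" "pd X0" "dual_feasible C A y0 Z0"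
  shows "bdd_above ((\<lambda>(y, Z). trace Z) ` dual_opt C A b)"
proof -
  obtain \<mu> where "0 < \<mu>" and bound: "\<And>Z. psd Z \<Longrightarrow> \<mu> * trace Z \<le> tinner Z X0"
    using pd_trace_bound[OF assms(1,3)] by metis
  have "trace Z \<le> (tinner C X0 - b \<bullet> y0) / \<mu>" if "(y, Z) \<in> dual_opt C A b" for y Z
  proof -
    have "dual_feasible C A y Z" "b \<bullet> y0 \<le> b \<bullet> y"
      using that assms(4) by (auto simp: dual_opt_def)
    then have "\<mu> * trace Z \<le> tinner C X0 - b \<bullet> y0"
      using bound tinner_objective_split[of Z A y C X0 b] assms(2)
      by (fastforce simp: dual_feasible_def)
    then show ?thesis using \<open>0 < \<mu>\<close> by (simp add: pos_le_divide_eq mult.commute)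
  qed
  then show ?thesis by (auto intro!: bdd_aboveI)
qed

section \<open>The exact penalty\<close>

lemma penalty_obj_psd:
  assumes "symm X" "psd X"
  shows "penalty_obj C \<rho> X = tinner C X"
  using psd_iff_lambda_max_uminus_nonpos[OF assms(1)] assms(2) by (simp add: penalty_obj_def)

lemma penalty_obj_lower_bound:
  assumes "symm X" "opA A X = b" "dual_feasible C A y Z"
  shows "b \<bullet> y + (\<rho> - trace Z) * max (lambda_max (- X)) 0 \<le> penalty_obj C \<rho> X"
proof -
  let ?t = "max (lambda_max (- X)) 0"
  have Z: "symm Z" "Z + adjA A y = C" "psd Z" using assms(3) by (simp_all add: dual_feasible_def)
  have "psd (X + ?t *\<^sub>R mat 1)" by (rule psd_add_shift[OF assms(1)]) simp
  then have "0 \<le> tinner Z (X + ?t *\<^sub>R mat 1)"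
    using tinner_psd_nonneg[OF Z(3)] assms(1) by (simp add: symm_add symm_scaleR symm_mat)
  then have "0 \<le> tinner Z X + ?t * trace Z"
    by (simp add: tinner_add_right tinner_scaleR_right tinner_mat_1)
  then show ?thesis
    using tinner_objective_split[OF Z(2) assms(2)] by (simp add: penalty_obj_def algebra_simps)
qed

theorem exact_penalty:
  assumes dual: "dual_feasible C A y Z"
    and gap: "\<And>c. (\<And>X. primal_feasible A b X \<Longrightarrow> c \<le> tinner C X) \<Longrightarrow> c \<le> b \<bullet> y"
    and rho: "trace Z < \<rho>" and symX: "symm Xh"
  shows "Xh \<in> primal_opt C A b \<longleftrightarrow> Xh \<in> penalized_opt C A b \<rho>"
proof
  assume "Xh \<in> primal_opt C A b"
  then have feas: "primal_feasible A b Xh"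
    and opt: "\<And>X. primal_feasible A b X \<Longrightarrow> tinner C Xh \<le> tinner C X"
    by (auto simp: primal_opt_def)
  have "penalty_obj C \<rho> Xh \<le> penalty_obj C \<rho> X" if "symm X" "opA A X = b" for X
  proof -
    have "penalty_obj C \<rho> Xh \<le> b \<bullet> y"
      using gap[OF opt] feas penalty_obj_psd[of Xh C \<rho>] by (simp add: primal_feasible_def)
    also have "\<dots> \<le> penalty_obj C \<rho> X"
    proof -
      have "0 \<le> (\<rho> - trace Z) * max (lambda_max (- X)) 0" using rho by (intro mult_nonneg_nonneg) auto
      then show ?thesis using penalty_obj_lower_bound[OF that dual, of \<rho>] by linarith
    qed
    finally show ?thesis .
  qed
  then show "Xh \<in> penalized_opt C A b \<rho>"
    using feas by (simp add: penalized_opt_def primal_feasible_def)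
next
  assume "Xh \<in> penalized_opt C A b \<rho>"
  then have eq: "opA A Xh = b"
    and opt: "\<And>X. symm X \<Longrightarrow> opA A X = b \<Longrightarrow> penalty_obj C \<rho> Xh \<le> penalty_obj C \<rho> X"
    by (auto simp: penalized_opt_def)
  have below: "penalty_obj C \<rho> Xh \<le> tinner C X" if "primal_feasible A b X" for X
    using opt[of X] penalty_obj_psd[of X] that by (simp add: primal_feasible_def)
  have "(\<rho> - trace Z) * max (lambda_max (- Xh)) 0 \<le> 0"
    using penalty_obj_lower_bound[OF symX eq dual, of \<rho>] gap[OF below] by linarith
  then have "lambda_max (- Xh) \<le> 0" using rho by (simp add: mult_le_0_iff)
  then have feas: "primal_feasible A b Xh"
    using symX eq psd_iff_lambda_max_uminus_nonpos[OF symX] by (simp add: primal_feasible_def)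
  then show "Xh \<in> primal_opt C A b"
    using below penalty_obj_psd[of Xh] by (simp add: primal_opt_def primal_feasible_def)
qed

theorem proposition3p1:
  fixes C :: "real^'n::finite^'n" and A :: "'m::finite \<Rightarrow> real^'n^'n"
    and b :: "real^'m" and \<rho> :: real and Xh :: "real^'n^'n"
  assumes symC: "symm C" and symA: "\<And>i. symm (A i)"
    and indep: "\<And>y. (\<Sum>i\<in>UNIV. (y $ i) *\<^sub>R A i) = 0 \<Longrightarrow> y = 0"
    and strict_primal: "\<exists>X. symm X \<and> opA A X = b \<and> pd X"
    and strict_dual: "\<exists>y Z. symm Z \<and> Z + adjA A y = C \<and> pd Z"
    and rho: "\<rho> > DZstar C A b"
    and symX: "symm Xh"
  shows "Xh \<in> primal_opt C A b \<longleftrightarrow> Xh \<in> penalized_opt C A b \<rho>"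
proof -
  obtain X0 where X0: "symm X0" "opA A X0 = b" "pd X0" using strict_primal by blast
  obtain y0 Z0 where "symm Z0" "Z0 + adjA A y0 = C" "pd Z0" using strict_dual by blast
  then have dual0: "dual_feasible C A y0 Z0" by (simp add: dual_feasible_def pd_imp_psd)
  obtain y Z where dual: "dual_feasible C A y Z"
    and gap: "\<And>c. (\<And>X. primal_feasible A b X \<Longrightarrow> c \<le> tinner C X) \<Longrightarrow> c \<le> b \<bullet> y"
    using zero_duality_gap[OF symC symA indep X0 dual0] by blast
  have "b \<bullet> y' \<le> b \<bullet> y" if "dual_feasible C A y' Z'" for y' Z'
    using weak_duality[OF _ that] by (rule gap)
  then have "(y, Z) \<in> dual_opt C A b" unfolding dual_opt_def using dual by blast
  then have "trace Z \<le> DZstar C A b"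
    unfolding DZstar_def
    by (intro cSup_upper bdd_above_dual_opt_trace[OF X0 dual0]) force
  then show ?thesis using exact_penalty[OF dual gap _ symX] rho by simp
qed

end
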